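(* Let $a>0$ and $p\in(2,+\infty)$. Let $x\in C^0(\mathbb{R}_+\times[0,1])\cap C^{1,2}((0,\infty)\times(0,1))$, with $x[t]:=x(t,\cdot)\in C^2([0,1])$ for all $t\ge0$, be a classical solution of $\partial_tx(t,z)=a\,\partial_z^2x(t,z)$ on $(0,\infty)\times(0,1)$ with $x(t,0)=x(t,1)=0$ for $t\ge0$ and $x(0,\cdot)=x_0\in C^2([0,1])$. Then for all $t\ge0$, $\|x[t]\|_p\le e^{-a(p-1)\frac{4\pi^2}{p^2}t}\|x_0\|_p$, where $\|g\|_p=\left(\int_0^1|g(z)|^pdz\right)^{1/p}$. *)

theory Defs
  imports "HOL-Analysis.Analysis"
begin

definition C2_on :: "real set \<Rightarrow> (real \<Rightarrow> real) \<Rightarrow> bool" where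
  "C2_on S f \<longleftrightarrow> (\<exists>f' f''.
      (\<forall>z\<in>S. (f has_real_derivative f' z) (at z within S)
             \<and> (f' has_real_derivative f'' z) (at z within S))
      \<and> continuous_on S f'')"

definition lp_norm :: "real \<Rightarrow> (real \<Rightarrow> real) \<Rightarrow> real" where
  "lp_norm p g = (integral {0..1} (\<lambda>z. \<bar>g z\<bar> powr p)) powr (1 / p)"

end

theory Submission
  imports Defs
begin

text \<open>
  Let E(t) be the integral of |x(t,z)|^p over [0,1]. Differentiating under the integral and
  integrating by parts gives E' = -a p (p-1) \<integral> |x|^(p-2) x_z^2 = -a (4 (p-1) / p) \<integral> ((|x|^(p/2))_z)^2,
  and Wirtinger's inequality for functions vanishing at 0 and 1 bounds the last integral from below
  by pi^2 E. Hence E(t) \<le> exp (-a (4 (p-1) / p) pi^2 t) E(0), and taking p-th roots gives the claim.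

  For k < pi, Wirtinger's inequality with constant k^2 follows by completing a square against
  h(z) = -k tan (k (z - 1/2)), a solution of h' = -k^2 - h^2 that is bounded on [0,1]; then k \<rightarrow> pi.
  Since the solution is only known to be differentiable in the interior, E is replaced by the integral
  of |x|^p against a trapezoidal cut-off that rises from 0 to 1 on [\<delta>, \<delta> + \<eta>] and falls back
  on [1 - \<delta> - \<eta>, 1 - \<delta>]. The resulting boundary terms are values of |x|^p at \<delta> and 1 - \<delta>
  divided by \<eta>; by uniform continuity and the boundary condition they are O(\<eta>) once \<delta> is small.
  A linear Gronwall argument and \<eta> \<rightarrow> 0 finish the proof.
\<close>

lemma has_real_derivative_abs_powr_mult:
  fixes q u :: real
  assumes q: "q > 0"
  shows "((\<lambda>v. \<bar>v\<bar> powr q * v) has_real_derivative (q + 1) * \<bar>u\<bar> powr q) (at u)"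
proof -
  consider "u > 0" | "u < 0" | "u = 0" by linarith
  then show ?thesis
  proof cases
    case 1
    have "eventually (\<lambda>v. v > 0) (nhds u)"
      using eventually_nhds_in_open[of "{0<..}" u] 1 by simp
    then have ev: "eventually (\<lambda>v. \<bar>v\<bar> powr q * v = v powr (q + 1)) (nhds u)"
      by eventually_elim (simp add: powr_add)
    have "((\<lambda>v. v powr (q + 1)) has_real_derivative (q + 1) * u powr (q + 1 - 1)) (at u)"
      using 1 by (rule has_real_derivative_powr)
    then show ?thesis using 1 by (subst DERIV_cong_ev[OF refl ev refl]) simp
  next
    case 2
    have "eventually (\<lambda>v. v < 0) (nhds u)"
      using eventually_nhds_in_open[of "{..<0}" u] 2 by simp
    then have ev: "eventually (\<lambda>v. \<bar>v\<bar> powr q * v = - ((- v) powr (q + 1))) (nhds u)"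
      by eventually_elim (simp add: powr_add)
    have "((\<lambda>v. - ((- v) powr (q + 1))) has_real_derivative
            - ((q + 1) * (- u) powr (q + 1 - 1) * (- 1))) (at u)"
      using 2 by (auto intro!: derivative_eq_intros)
    then show ?thesis using 2 by (subst DERIV_cong_ev[OF refl ev refl]) simp
  next
    case 3
    have "((\<lambda>v. \<bar>v\<bar> powr q) \<longlongrightarrow> 0) (at 0)"
      using q by (intro tendsto_zero_powrI) (auto intro!: tendsto_eq_intros)
    then have "((\<lambda>v. (\<bar>v\<bar> powr q * v - \<bar>0\<bar> powr q * 0) / (v - 0)) \<longlongrightarrow> 0) (at (0::real))"
      by (rule Lim_transform_eventually) (auto simp: eventually_at_filter)
    then show ?thesis using 3 q by (simp add: has_field_derivative_iff)
  qed
qed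

lemma abs_powr_eq_abs_powr_diff_2_mult_square:
  fixes v p :: real
  shows "\<bar>v\<bar> powr p = \<bar>v\<bar> powr (p - 2) * v\<^sup>2"
proof -
  have "\<bar>v\<bar> powr 2 = v\<^sup>2"
    by (cases "v = 0") (simp_all add: powr_numeral)
  then have "\<bar>v\<bar> powr (p - 2) * v\<^sup>2 = \<bar>v\<bar> powr (p - 2) * \<bar>v\<bar> powr 2" by simp
  also have "\<dots> = \<bar>v\<bar> powr p" by (simp only: powr_add[symmetric]) simp
  finally show ?thesis by simp
qed

lemma has_real_derivative_abs_powr:
  fixes p u :: real
  assumes p: "p > 2"
  shows "((\<lambda>v. \<bar>v\<bar> powr p) has_real_derivative p * (\<bar>u\<bar> powr (p - 2) * u)) (at u)"
proof -
  have eq: "\<bar>v\<bar> powr p = (\<bar>v\<bar> powr (p - 2) * v) * v" for v :: real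
    by (simp add: abs_powr_eq_abs_powr_diff_2_mult_square[of v p] power2_eq_square)
  have "((\<lambda>v. (\<bar>v\<bar> powr (p - 2) * v) * v) has_real_derivative
          ((p - 2 + 1) * \<bar>u\<bar> powr (p - 2)) * u + (\<bar>u\<bar> powr (p - 2) * u) * 1) (at u)"
    using DERIV_mult'[OF has_real_derivative_abs_powr_mult[of "p - 2" u] DERIV_ident] p
    by (simp add: add.commute)
  then show ?thesis unfolding eq by (simp add: algebra_simps)
qed

lemma has_real_derivative_abs_powr_comp:
  fixes y :: "real \<Rightarrow> real"
  assumes "p > 2" and "(y has_real_derivative y') (at z)"
  shows "((\<lambda>w. \<bar>y w\<bar> powr p) has_real_derivative p * (\<bar>y z\<bar> powr (p - 2) * y z) * y') (at z)"
  using DERIV_chain2[OF has_real_derivative_abs_powr[OF assms(1)] assms(2)] by simp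

lemma continuous_on_of_has_real_derivative:
  fixes f f' :: "real \<Rightarrow> real"
  assumes "\<And>z. z \<in> S \<Longrightarrow> (f has_real_derivative f' z) (at z)"
  shows "continuous_on S f"
  using assms by (intro continuous_at_imp_continuous_on ballI DERIV_isCont) blast

lemma gronwall_linear:
  fixes G :: "real \<Rightarrow> real" and \<Lambda> b t :: real
  assumes t: "t \<ge> 0" and \<Lambda>: "\<Lambda> \<ge> 0" and b: "b \<ge> 0"
    and G_cont: "continuous_on {0..t} G"
    and G_deriv: "\<And>s. 0 < s \<Longrightarrow> s < t \<Longrightarrow> \<exists>D. (G has_real_derivative D) (at s) \<and> D \<le> b - \<Lambda> * G s"
  shows "exp (\<Lambda> * t) * G t \<le> G 0 + b * t * exp (\<Lambda> * t)"
proof -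
  define H where "H s = exp (\<Lambda> * s) * G s - b * exp (\<Lambda> * t) * s" for s
  have "H t \<le> H 0"
  proof (rule DERIV_nonpos_imp_decreasing_open[OF t])
    fix s assume s: "0 < s" "s < t"
    then obtain D where D: "(G has_real_derivative D) (at s)" and D_le: "D \<le> b - \<Lambda> * G s"
      using G_deriv by blast
    have "(H has_real_derivative exp (\<Lambda> * s) * (D + \<Lambda> * G s) - b * exp (\<Lambda> * t)) (at s)"
      unfolding H_def[abs_def]
      by (auto intro!: derivative_eq_intros D simp: algebra_simps)
    moreover have "exp (\<Lambda> * s) * (D + \<Lambda> * G s) \<le> exp (\<Lambda> * s) * b"
      using D_le by (intro mult_left_mono) auto
    moreover have "exp (\<Lambda> * s) * b \<le> b * exp (\<Lambda> * t)"
      using s \<Lambda> b by (subst mult.commute, intro mult_left_mono) (auto simp: mult_left_mono)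
    ultimately show "\<exists>y. (H has_real_derivative y) (at s) \<and> y \<le> 0"
      by (intro exI conjI) (assumption, linarith)
  next
    show "continuous_on {0..t} H"
      unfolding H_def[abs_def] by (intro continuous_intros G_cont)
  qed
  then show ?thesis by (simp add: H_def algebra_simps)
qed

lemma integral_le_integral_subinterval_add:
  fixes f :: "real \<Rightarrow> real"
  assumes f: "f integrable_on {a..b}" and ord: "a \<le> c" "c \<le> d" "d \<le> b"
    and M: "\<And>z. z \<in> {a..b} \<Longrightarrow> f z \<le> M"
  shows "integral {a..b} f \<le> integral {c..d} f + (c - a + (b - d)) * M"
proof -
  have int: "f integrable_on {l..r}" if "a \<le> l" "r \<le> b" for l r
    using integrable_subinterval_real[OF f] that by auto
  have outer: "integral {l..r} f \<le> (r - l) * M" if "a \<le> l" "l \<le> r" "r \<le> b" for l r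
  proof -
    have "integral {l..r} f \<le> integral {l..r} (\<lambda>_. M)"
      using that M by (intro integral_le int) auto
    then show ?thesis using that by simp
  qed
  have "integral {a..c} f + integral {c..b} f = integral {a..b} f"
    using ord by (intro Henstock_Kurzweil_Integration.integral_combine[OF _ _ f]) auto
  moreover have "integral {c..d} f + integral {d..b} f = integral {c..b} f"
    using ord by (intro Henstock_Kurzweil_Integration.integral_combine[OF _ _ int]) auto
  ultimately have "integral {a..b} f = integral {a..c} f + (integral {c..d} f + integral {d..b} f)"
    by simp
  then show ?thesis
    using outer[of a c] outer[of d b] ord by (simp add: algebra_simps)
qed

section \<open>Weighted L^p dissipation on an interval\<close>

lemma has_integral_weighted_abs_powr_ftc:
  fixes y y' y'' w :: "real \<Rightarrow> real"
  assumes p: "p > 2" and "c \<le> d"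
    and y: "\<And>z. z \<in> {c..d} \<Longrightarrow> (y has_real_derivative y' z) (at z)"
    and y': "\<And>z. z \<in> {c..d} \<Longrightarrow> (y' has_real_derivative y'' z) (at z)"
    and w: "\<And>z. z \<in> {c..d} \<Longrightarrow> (w has_real_derivative B) (at z)"
  defines "\<Phi> \<equiv> \<lambda>z. w z * (p * (\<bar>y z\<bar> powr (p - 2) * y z) * y' z) - B * \<bar>y z\<bar> powr p"
  shows "((\<lambda>z. w z * (p * (p - 1) * \<bar>y z\<bar> powr (p - 2) * (y' z)\<^sup>2
                      + p * (\<bar>y z\<bar> powr (p - 2) * y z) * y'' z)) has_integral \<Phi> d - \<Phi> c) {c..d}"
proof (rule fundamental_theorem_of_calculus[OF \<open>c \<le> d\<close>], unfold has_real_derivative_iff_has_vector_derivative[symmetric])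
  fix z assume z: "z \<in> {c..d}"
  have odd: "((\<lambda>v. \<bar>y v\<bar> powr (p - 2) * y v) has_real_derivative (p - 2 + 1) * \<bar>y z\<bar> powr (p - 2) * y' z) (at z)"
    using DERIV_chain2[OF has_real_derivative_abs_powr_mult y[OF z], of "p - 2"] p by simp
  have flux: "((\<lambda>v. p * (\<bar>y v\<bar> powr (p - 2) * y v) * y' v) has_real_derivative
      p * ((p - 2 + 1) * \<bar>y z\<bar> powr (p - 2) * y' z) * y' z + p * (\<bar>y z\<bar> powr (p - 2) * y z) * y'' z) (at z)"
    using DERIV_mult'[OF DERIV_cmult[OF odd] y'[OF z]] by (simp add: add.commute)
  have "(\<Phi> has_real_derivative w z * (p * (p - 1) * \<bar>y z\<bar> powr (p - 2) * (y' z)\<^sup>2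
                      + p * (\<bar>y z\<bar> powr (p - 2) * y z) * y'' z)) (at z)"
    unfolding \<Phi>_def
    by (rule DERIV_cong[OF DERIV_diff[OF DERIV_mult'[OF w[OF z] flux]
          DERIV_cmult[OF has_real_derivative_abs_powr_comp[OF p y[OF z]], of B]]])
      (simp add: algebra_simps power2_eq_square)
  then show "(\<Phi> has_real_derivative w z * (p * (p - 1) * \<bar>y z\<bar> powr (p - 2) * (y' z)\<^sup>2
                      + p * (\<bar>y z\<bar> powr (p - 2) * y z) * y'' z)) (at z within {c..d})"
    by (rule has_field_derivative_at_within)
qed

lemma abs_powr_dissipation_ge_riccati:
  fixes y y' h :: "real \<Rightarrow> real" and k :: real
  assumes p: "p > 2" and "c \<le> d"
    and y: "\<And>z. z \<in> {c..d} \<Longrightarrow> (y has_real_derivative y' z) (at z)"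
    and y'_cont: "continuous_on {c..d} y'"
    and h: "\<And>z. z \<in> {c..d} \<Longrightarrow> (h has_real_derivative - (k\<^sup>2) - (h z)\<^sup>2) (at z)"
  shows "4 * (p - 1) / p * (k\<^sup>2 * integral {c..d} (\<lambda>z. \<bar>y z\<bar> powr p)
           + h d * \<bar>y d\<bar> powr p - h c * \<bar>y c\<bar> powr p)
         \<le> integral {c..d} (\<lambda>z. p * (p - 1) * \<bar>y z\<bar> powr (p - 2) * (y' z)\<^sup>2)"
proof -
  define \<kappa> where "\<kappa> = 4 * (p - 1) / p"
  define u where "u = (\<lambda>z. \<bar>y z\<bar> powr p)"
  define g where "g = (\<lambda>z. p * (p - 1) * \<bar>y z\<bar> powr (p - 2) * (y' z)\<^sup>2)"
  define \<Psi> where "\<Psi> z = h z * u z" for z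
  define \<Psi>' where "\<Psi>' z = (- (k\<^sup>2) - (h z)\<^sup>2) * u z + h z * (p * (\<bar>y z\<bar> powr (p - 2) * y z) * y' z)" for z
  have y_cont: "continuous_on {c..d} y"
    using y by (rule continuous_on_of_has_real_derivative)
  have ftc: "(\<Psi>' has_integral \<Psi> d - \<Psi> c) {c..d}"
  proof (rule fundamental_theorem_of_calculus[OF \<open>c \<le> d\<close>], unfold has_real_derivative_iff_has_vector_derivative[symmetric])
    fix z assume z: "z \<in> {c..d}"
    have "(\<Psi> has_real_derivative \<Psi>' z) (at z)"
      unfolding \<Psi>_def u_def
      by (rule DERIV_cong[OF DERIV_mult'[OF h[OF z] has_real_derivative_abs_powr_comp[OF p y[OF z]]]])
        (simp add: \<Psi>'_def u_def algebra_simps)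
    then show "(\<Psi> has_real_derivative \<Psi>' z) (at z within {c..d})"
      by (rule has_field_derivative_at_within)
  qed
  have u_int: "(u has_integral integral {c..d} u) {c..d}"
    unfolding u_def using y_cont p
    by (intro integrable_integral integrable_continuous_interval continuous_intros continuous_on_powr') auto
  have g_int: "(g has_integral integral {c..d} g) {c..d}"
    unfolding g_def using y_cont y'_cont p
    by (intro integrable_integral integrable_continuous_interval continuous_intros continuous_on_powr') auto
  have "\<kappa> * k\<^sup>2 * u z + \<kappa> * \<Psi>' z \<le> g z" for z
  proof -
    have "g z - (\<kappa> * k\<^sup>2 * u z + \<kappa> * \<Psi>' z)
        = (p - 1) / p * \<bar>y z\<bar> powr (p - 2) * (p * y' z - 2 * h z * y z)\<^sup>2"
      using p unfolding g_def \<kappa>_def \<Psi>'_def u_def abs_powr_eq_abs_powr_diff_2_mult_square[of "y z" p]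
      by (simp add: field_simps power2_eq_square)
    also have "\<dots> \<ge> 0" using p by simp
    finally show ?thesis by simp
  qed
  then have "\<kappa> * k\<^sup>2 * integral {c..d} u + \<kappa> * (\<Psi> d - \<Psi> c) \<le> integral {c..d} g"
    by (intro has_integral_le[OF has_integral_add[OF has_integral_mult_right[OF u_int]
          has_integral_mult_right[OF ftc]] g_int])
  then show ?thesis
    unfolding \<kappa>_def \<Psi>_def u_def g_def by (simp add: algebra_simps)
qed

lemma has_real_derivative_tan_riccati:
  fixes k z :: real
  assumes k: "0 < k" "k < pi" and z: "z \<in> {0..1}"
  shows "((\<lambda>z. - k * tan (k * (z - 1/2))) has_real_derivative
           - (k\<^sup>2) - (- k * tan (k * (z - 1/2)))\<^sup>2) (at z)"
proof -
  define y where "y = k * (z - 1/2)"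
  have "\<bar>y\<bar> \<le> k / 2"
    using z k by (auto simp: y_def abs_mult abs_le_iff mult_le_cancel_left field_simps)
  then have cos_pos: "cos y > 0"
    using k by (intro cos_gt_zero_pi) auto
  have "((\<lambda>z. - k * tan (k * (z - 1/2))) has_real_derivative - k * (inverse ((cos y)\<^sup>2) * k)) (at z)"
    using cos_pos unfolding y_def by (auto intro!: derivative_eq_intros)
  moreover have "- k * (inverse ((cos y)\<^sup>2) * k) = - (k\<^sup>2) - (- k * tan y)\<^sup>2"
  proof -
    have "k * (k * (cos y * cos y)) + k * (k * (sin y * sin y)) = k * k"
      using sin_cos_squared_add3[of y] by (metis distrib_left mult.assoc mult_1_right)
    then show ?thesis using cos_pos by (simp add: tan_def field_simps power2_eq_square)
  qed
  ultimately show ?thesis by (simp add: y_def)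
qed

lemma bounded_riccati_solution:
  fixes k :: real
  assumes "0 < k" "k < pi"
  obtains h :: "real \<Rightarrow> real" and C where
    "\<And>z. z \<in> {0..1} \<Longrightarrow> (h has_real_derivative - (k\<^sup>2) - (h z)\<^sup>2) (at z)"
    and "\<And>z. z \<in> {0..1} \<Longrightarrow> \<bar>h z\<bar> \<le> C"
proof -
  define h where "h z = - k * tan (k * (z - 1/2))" for z
  have h: "\<And>z. z \<in> {0..1} \<Longrightarrow> (h has_real_derivative - (k\<^sup>2) - (h z)\<^sup>2) (at z)"
    unfolding h_def using has_real_derivative_tan_riccati[OF assms] by blast
  have "compact (h ` {0..1})"
    by (intro compact_continuous_image continuous_on_of_has_real_derivative[OF h] compact_Icc)
  then obtain C where "\<And>z. z \<in> {0..1} \<Longrightarrow> \<bar>h z\<bar> \<le> C"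
    by (fastforce dest: compact_imp_bounded simp: bounded_real)
  with h show ?thesis by (rule that)
qed

definition trapezoid :: "real \<Rightarrow> real \<Rightarrow> real \<Rightarrow> real \<Rightarrow> real" where
  "trapezoid c d \<eta> z = min 1 (min ((z - c) / \<eta>) ((d - z) / \<eta>))"

lemma trapezoid_bounds:
  assumes "\<eta> > 0" and "z \<in> {c..d}"
  shows "0 \<le> trapezoid c d \<eta> z" and "trapezoid c d \<eta> z \<le> 1"
  using assms by (auto simp: trapezoid_def)

lemma trapezoid_eq:
  assumes "\<eta> > 0" and "c + 2 * \<eta> \<le> d"
  shows "z \<in> {c..c + \<eta>} \<Longrightarrow> trapezoid c d \<eta> z = (z - c) / \<eta>"
    and "z \<in> {c + \<eta>..d - \<eta>} \<Longrightarrow> trapezoid c d \<eta> z = 1"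
    and "z \<in> {d - \<eta>..d} \<Longrightarrow> trapezoid c d \<eta> z = (d - z) / \<eta>"
  using assms by (auto simp: trapezoid_def min_def divide_le_cancel le_divide_eq divide_le_eq)

lemma continuous_on_trapezoid: "continuous_on S (trapezoid c d \<eta>)"
  unfolding trapezoid_def divide_inverse by (intro continuous_intros)

lemma has_integral_trapezoid_abs_powr_ftc:
  fixes y y' y'' :: "real \<Rightarrow> real"
  assumes p: "p > 2" and \<eta>: "\<eta> > 0" and cd: "c + 2 * \<eta> \<le> d"
    and y: "\<And>z. z \<in> {c..d} \<Longrightarrow> (y has_real_derivative y' z) (at z)"
    and y': "\<And>z. z \<in> {c..d} \<Longrightarrow> (y' has_real_derivative y'' z) (at z)"
  shows "((\<lambda>z. trapezoid c d \<eta> z * (p * (p - 1) * \<bar>y z\<bar> powr (p - 2) * (y' z)\<^sup>2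
                      + p * (\<bar>y z\<bar> powr (p - 2) * y z) * y'' z)) has_integral
          (\<bar>y c\<bar> powr p + \<bar>y d\<bar> powr p - \<bar>y (c + \<eta>)\<bar> powr p - \<bar>y (d - \<eta>)\<bar> powr p) / \<eta>) {c..d}"
proof -
  define \<alpha> \<beta> where "\<alpha> = c + \<eta>" and "\<beta> = d - \<eta>"
  define u where "u = (\<lambda>z. \<bar>y z\<bar> powr p)"
  define q where "q = (\<lambda>z. p * (\<bar>y z\<bar> powr (p - 2) * y z) * y' z)"
  define G where "G = (\<lambda>z. p * (p - 1) * \<bar>y z\<bar> powr (p - 2) * (y' z)\<^sup>2 + p * (\<bar>y z\<bar> powr (p - 2) * y z) * y'' z)"
  define T where "T = trapezoid c d \<eta>"
  have ord: "c \<le> \<alpha>" "\<alpha> \<le> \<beta>" "\<beta> \<le> d" using \<eta> cd by (auto simp: \<alpha>_def \<beta>_def)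
  have "((\<lambda>z. (z - c) / \<eta> * G z) has_integral
      ((\<alpha> - c) / \<eta> * q \<alpha> - 1 / \<eta> * u \<alpha>) - ((c - c) / \<eta> * q c - 1 / \<eta> * u c)) {c..\<alpha>}"
    unfolding G_def q_def u_def
    by (rule has_integral_weighted_abs_powr_ftc[OF p ord(1)])
      (use ord \<eta> in \<open>auto intro!: y y' derivative_eq_intros\<close>)
  then have left: "((\<lambda>z. T z * G z) has_integral q \<alpha> - u \<alpha> / \<eta> + u c / \<eta>) {c..\<alpha>}"
    using \<eta> trapezoid_eq(1)[OF \<eta> cd] has_integral_cong[of "{c..\<alpha>}" "\<lambda>z. (z - c) / \<eta> * G z" "\<lambda>z. T z * G z"]
    by (simp add: T_def \<alpha>_def diff_divide_distrib)
  have "((\<lambda>z. 1 * G z) has_integral (1 * q \<beta> - 0 * u \<beta>) - (1 * q \<alpha> - 0 * u \<alpha>)) {\<alpha>..\<beta>}"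
    unfolding G_def q_def u_def
    by (rule has_integral_weighted_abs_powr_ftc[OF p ord(2)])
      (use ord \<eta> in \<open>auto intro!: y y' derivative_eq_intros\<close>)
  then have middle: "((\<lambda>z. T z * G z) has_integral q \<beta> - q \<alpha>) {\<alpha>..\<beta>}"
    using trapezoid_eq(2)[OF \<eta> cd] has_integral_cong[of "{\<alpha>..\<beta>}" "\<lambda>z. 1 * G z" "\<lambda>z. T z * G z"]
    by (simp add: T_def \<alpha>_def \<beta>_def)
  have "((\<lambda>z. (d - z) / \<eta> * G z) has_integral
      ((d - d) / \<eta> * q d - (- 1 / \<eta>) * u d) - ((d - \<beta>) / \<eta> * q \<beta> - (- 1 / \<eta>) * u \<beta>)) {\<beta>..d}"
    unfolding G_def q_def u_def
    by (rule has_integral_weighted_abs_powr_ftc[OF p ord(3)])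
      (use ord \<eta> in \<open>auto intro!: y y' derivative_eq_intros\<close>)
  then have right: "((\<lambda>z. T z * G z) has_integral u d / \<eta> - q \<beta> - u \<beta> / \<eta>) {\<beta>..d}"
    using \<eta> trapezoid_eq(3)[OF \<eta> cd] has_integral_cong[of "{\<beta>..d}" "\<lambda>z. (d - z) / \<eta> * G z" "\<lambda>z. T z * G z"]
    by (simp add: T_def \<beta>_def diff_diff_eq)
  \<comment> \<open>The flux terms q cancel at the junctions; the slopes \<open>\<plusminus>1/\<eta>\<close> leave the corner values of |y|^p.\<close>
  have "((\<lambda>z. T z * G z) has_integral (u c + u d - u \<alpha> - u \<beta>) / \<eta>) {c..d}"
    using ord \<eta>
    by (intro has_integral_eq_rhs[OF has_integral_combine[OF ord(1) _ left has_integral_combine[OF ord(2,3) middle right]]])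
      (auto simp: field_simps)
  then show ?thesis by (simp add: T_def G_def u_def \<alpha>_def \<beta>_def)
qed

lemma mult_le_of_abs_mult_le:
  fixes \<kappa> h u r :: real
  assumes "\<kappa> \<ge> 0" and "u \<ge> 0" and "\<kappa> * \<bar>h\<bar> \<le> r"
  shows "\<kappa> * h * u \<le> r * u" and "- (\<kappa> * h * u) \<le> r * u"
proof -
  have "\<kappa> * h \<le> \<kappa> * \<bar>h\<bar>" and "\<kappa> * (- h) \<le> \<kappa> * \<bar>h\<bar>"
    using assms(1) by (intro mult_left_mono; simp)+
  then have "\<kappa> * h \<le> r" and "\<kappa> * (- h) \<le> r"
    using assms(3) by linarith+
  then show "\<kappa> * h * u \<le> r * u" and "- (\<kappa> * h * u) \<le> r * u"
    using mult_right_mono[OF _ assms(2)] by (metis mult_minus_left mult_minus_right)+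
qed

lemma integral_trapezoid_abs_powr_laplacian_le:
  fixes y y' y'' h :: "real \<Rightarrow> real" and k :: real
  assumes p: "p > 2" and \<eta>: "\<eta> > 0" and cd: "c + 2 * \<eta> \<le> d"
    and y: "\<And>z. z \<in> {c..d} \<Longrightarrow> (y has_real_derivative y' z) (at z)"
    and y': "\<And>z. z \<in> {c..d} \<Longrightarrow> (y' has_real_derivative y'' z) (at z)"
    and h: "\<And>z. z \<in> {c + \<eta>..d - \<eta>} \<Longrightarrow> (h has_real_derivative - (k\<^sup>2) - (h z)\<^sup>2) (at z)"
    and h_left: "4 * (p - 1) / p * \<bar>h (c + \<eta>)\<bar> \<le> 1 / \<eta>"
    and h_right: "4 * (p - 1) / p * \<bar>h (d - \<eta>)\<bar> \<le> 1 / \<eta>"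
  shows "integral {c..d} (\<lambda>z. trapezoid c d \<eta> z * (p * (\<bar>y z\<bar> powr (p - 2) * y z) * y'' z))
         \<le> (\<bar>y c\<bar> powr p + \<bar>y d\<bar> powr p) / \<eta>
            - 4 * (p - 1) / p * k\<^sup>2 * integral {c + \<eta>..d - \<eta>} (\<lambda>z. \<bar>y z\<bar> powr p)"
proof -
  define \<kappa> where "\<kappa> = 4 * (p - 1) / p"
  define \<alpha> \<beta> where "\<alpha> = c + \<eta>" and "\<beta> = d - \<eta>"
  define T where "T = trapezoid c d \<eta>"
  define u where "u = (\<lambda>z. \<bar>y z\<bar> powr p)"
  define g where "g = (\<lambda>z. p * (p - 1) * \<bar>y z\<bar> powr (p - 2) * (y' z)\<^sup>2)"
  define L where "L = (\<lambda>z. p * (\<bar>y z\<bar> powr (p - 2) * y z) * y'' z)"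
  have ord: "c \<le> \<alpha>" "\<alpha> \<le> \<beta>" "\<beta> \<le> d" using \<eta> cd by (auto simp: \<alpha>_def \<beta>_def)
  have y'_cont: "continuous_on {c..d} y'"
    using y' by (rule continuous_on_of_has_real_derivative)
  have y_cont: "continuous_on {c..d} y"
    using y by (rule continuous_on_of_has_real_derivative)
  have Tg_int: "(\<lambda>z. T z * g z) integrable_on {c..d}"
    unfolding T_def g_def using y_cont y'_cont p
    by (intro integrable_continuous_interval continuous_intros continuous_on_powr' continuous_on_trapezoid) auto
  have "((\<lambda>z. T z * L z) has_integral (u c + u d - u \<alpha> - u \<beta>) / \<eta> - integral {c..d} (\<lambda>z. T z * g z)) {c..d}"
    using has_integral_diff[OF has_integral_trapezoid_abs_powr_ftc[OF p \<eta> cd y y'] integrable_integral[OF Tg_int]]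
    by (simp add: T_def g_def L_def u_def \<alpha>_def \<beta>_def algebra_simps)
  then have TL: "integral {c..d} (\<lambda>z. T z * L z) = (u c + u d - u \<alpha> - u \<beta>) / \<eta> - integral {c..d} (\<lambda>z. T z * g z)"
    by (rule integral_unique)
  have "integral {\<alpha>..\<beta>} g = integral {\<alpha>..\<beta>} (\<lambda>z. T z * g z)"
    using trapezoid_eq(2)[OF \<eta> cd] by (intro integral_cong) (simp add: T_def \<alpha>_def \<beta>_def)
  also have "\<dots> \<le> integral {c..d} (\<lambda>z. T z * g z)"
    using ord Tg_int p trapezoid_bounds(1)[OF \<eta>]
    by (intro integral_subset_le integrable_subinterval_real[OF Tg_int]) (auto simp: T_def g_def)
  finally have g_le: "integral {\<alpha>..\<beta>} g \<le> integral {c..d} (\<lambda>z. T z * g z)" .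
  have "\<kappa> * (k\<^sup>2 * integral {\<alpha>..\<beta>} u + h \<beta> * u \<beta> - h \<alpha> * u \<alpha>) \<le> integral {\<alpha>..\<beta>} g"
    unfolding \<kappa>_def u_def g_def
    using ord y h continuous_on_subset[OF y'_cont]
    by (intro abs_powr_dissipation_ge_riccati[OF p ord(2)]) (auto simp: \<alpha>_def \<beta>_def)
  moreover have "\<kappa> * h \<alpha> * u \<alpha> \<le> 1 / \<eta> * u \<alpha>" and "- (\<kappa> * h \<beta> * u \<beta>) \<le> 1 / \<eta> * u \<beta>"
    using p h_left h_right unfolding \<kappa>_def \<alpha>_def \<beta>_def u_def
    by (intro mult_le_of_abs_mult_le; simp)+
  ultimately have "integral {c..d} (\<lambda>z. T z * L z) \<le> (u c + u d) / \<eta> - \<kappa> * k\<^sup>2 * integral {\<alpha>..\<beta>} u"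
    using TL g_le by (simp add: add_divide_distrib diff_divide_distrib algebra_simps)
  then show ?thesis by (simp add: T_def L_def u_def \<kappa>_def \<alpha>_def \<beta>_def)
qed

section \<open>Classical solutions of the heat equation\<close>

locale heat_solution =
  fixes a p :: real and x xt xz xzz :: "real \<Rightarrow> real \<Rightarrow> real"
  assumes a_pos: "a > 0"
    and p_gt: "p > 2"
    and cont: "continuous_on ({0..} \<times> {0..1}) (\<lambda>(t, z). x t z)"
    and d_t: "\<And>t z. t > 0 \<Longrightarrow> 0 < z \<Longrightarrow> z < 1 \<Longrightarrow>
                 ((\<lambda>s. x s z) has_real_derivative xt t z) (at t)"
    and d_z: "\<And>t z. t > 0 \<Longrightarrow> 0 < z \<Longrightarrow> z < 1 \<Longrightarrow>
                 ((\<lambda>w. x t w) has_real_derivative xz t z) (at z)"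
    and d_zz: "\<And>t z. t > 0 \<Longrightarrow> 0 < z \<Longrightarrow> z < 1 \<Longrightarrow>
                 ((\<lambda>w. xz t w) has_real_derivative xzz t z) (at z)"
    and cont_t: "continuous_on ({0<..} \<times> {0<..<1}) (\<lambda>(t, z). xt t z)"
    and pde: "\<And>t z. t > 0 \<Longrightarrow> 0 < z \<Longrightarrow> z < 1 \<Longrightarrow> xt t z = a * xzz t z"
    and bc: "\<And>t. t \<ge> 0 \<Longrightarrow> x t 0 = 0 \<and> x t 1 = 0"
begin

definition energy :: "real \<Rightarrow> real" where
  "energy s = integral {0..1} (\<lambda>z. \<bar>x s z\<bar> powr p)"

lemma continuous_on_abs_powr:
  assumes "S \<subseteq> {0..} \<times> {0..1}"
  shows "continuous_on S (\<lambda>(s, z). \<bar>x s z\<bar> powr p)"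
proof -
  have "continuous_on S (\<lambda>(s, z). x s z)"
    using continuous_on_subset[OF cont assms] .
  then show ?thesis
    using p_gt unfolding split_beta by (intro continuous_on_powr' continuous_intros) auto
qed

lemma continuous_on_slice:
  assumes "s \<ge> 0"
  shows "continuous_on {0..1} (x s)"
proof -
  have "continuous_on {0..1} ((\<lambda>(s, z). x s z) \<circ> Pair s)"
    using assms by (intro continuous_on_compose continuous_intros continuous_on_subset[OF cont]) auto
  then show ?thesis by (simp add: o_def)
qed

lemma integrable_abs_powr_slice:
  assumes "s \<ge> 0" and "{c..d} \<subseteq> {0..1}" and w: "continuous_on {c..d} w"
  shows "(\<lambda>z. w z * \<bar>x s z\<bar> powr p) integrable_on {c..d}"
  using continuous_on_subset[OF continuous_on_slice[OF assms(1)] assms(2)] w p_gt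
  by (intro integrable_continuous_interval continuous_intros continuous_on_powr') auto

lemma continuous_on_weighted_energy:
  assumes "{c..d} \<subseteq> {0..1}" and w: "continuous_on {c..d} w"
  shows "continuous_on {0..} (\<lambda>s. integral {c..d} (\<lambda>z. w z * \<bar>x s z\<bar> powr p))"
proof -
  have "continuous_on ({0..} \<times> cbox c d) (\<lambda>(s, z). w z * \<bar>x s z\<bar> powr p)"
  proof -
    have "continuous_on ({0..} \<times> cbox c d) (w \<circ> snd)"
      by (intro continuous_on_compose continuous_on_snd continuous_on_subset[OF w]) auto
    moreover have "continuous_on ({0..} \<times> cbox c d) (\<lambda>(s, z). \<bar>x s z\<bar> powr p)"
      using assms(1) by (intro continuous_on_abs_powr) auto
    ultimately show ?thesis
      by (auto simp: split_beta o_def intro: continuous_on_mult)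
  qed
  then show ?thesis using integral_continuous_on_param by fastforce
qed

lemma continuous_on_abs_powr_time_deriv:
  assumes S: "S \<subseteq> {0<..} \<times> {0<..<1}" and w: "continuous_on (snd ` S) w"
  shows "continuous_on S (\<lambda>(s, z). w z * (p * (\<bar>x s z\<bar> powr (p - 2) * x s z) * xt s z))"
proof -
  have "continuous_on S (\<lambda>v. w (snd v))"
    by (intro continuous_on_compose2[OF w continuous_on_snd]) auto
  moreover have "continuous_on S (\<lambda>v. x (fst v) (snd v))"
    using continuous_on_subset[OF cont, of S] S by (force simp: split_beta)
  moreover have "continuous_on S (\<lambda>v. xt (fst v) (snd v))"
    using continuous_on_subset[OF cont_t S] by (simp add: split_beta)
  ultimately show ?thesis
    using p_gt unfolding split_beta by (intro continuous_intros continuous_on_powr') auto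
qed

lemma has_real_derivative_weighted_energy:
  assumes cd: "0 < c" "c \<le> d" "d < 1" and s: "s > 0" and w: "continuous_on {c..d} w"
  shows "((\<lambda>s. integral {c..d} (\<lambda>z. w z * \<bar>x s z\<bar> powr p)) has_real_derivative
          a * integral {c..d} (\<lambda>z. w z * (p * (\<bar>x s z\<bar> powr (p - 2) * x s z) * xzz s z))) (at s)"
proof -
  let ?U = "{s/2<..}"
  let ?f' = "\<lambda>s z. w z * (p * (\<bar>x s z\<bar> powr (p - 2) * x s z) * xt s z)"
  have "((\<lambda>s. integral (cbox c d) (\<lambda>z. w z * \<bar>x s z\<bar> powr p)) has_real_derivative
          integral (cbox c d) (?f' s)) (at s within ?U)"
  proof (rule leibniz_rule_field_derivative)
    fix s' z assume "s' \<in> ?U" and "z \<in> cbox c d"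
    then have "s' > 0" "0 < z" "z < 1" using s cd by auto
    from DERIV_cmult[OF has_real_derivative_abs_powr_comp[OF p_gt d_t[OF this]], of "w z"]
    show "((\<lambda>s. w z * \<bar>x s z\<bar> powr p) has_real_derivative ?f' s' z) (at s' within ?U)"
      by (rule has_field_derivative_at_within)
  next
    fix s' assume "s' \<in> ?U"
    then show "(\<lambda>z. w z * \<bar>x s' z\<bar> powr p) integrable_on cbox c d"
      using s cd unfolding cbox_interval by (intro integrable_abs_powr_slice w) auto
  next
    show "continuous_on (?U \<times> cbox c d) (\<lambda>(s, z). ?f' s z)"
      using s cd by (intro continuous_on_abs_powr_time_deriv continuous_on_subset[OF w]) auto
  qed (use s in \<open>auto simp: convex_real_interval\<close>)
  then have "((\<lambda>s. integral {c..d} (\<lambda>z. w z * \<bar>x s z\<bar> powr p)) has_real_derivative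
          integral {c..d} (?f' s)) (at s)"
    using s by (subst (asm) at_within_open) auto
  moreover have "integral {c..d} (?f' s)
      = integral {c..d} (\<lambda>z. a * (w z * (p * (\<bar>x s z\<bar> powr (p - 2) * x s z) * xzz s z)))"
    by (rule integral_cong) (use cd s pde in auto)
  ultimately show ?thesis by simp
qed

lemma abs_powr_bounded:
  assumes "t \<ge> 0"
  obtains M where "\<And>s z. s \<in> {0..t} \<Longrightarrow> z \<in> {0..1} \<Longrightarrow> \<bar>x s z\<bar> powr p \<le> M"
proof -
  have "compact ((\<lambda>(s, z). \<bar>x s z\<bar> powr p) ` ({0..t} \<times> {0..1}))"
    by (intro compact_continuous_image continuous_on_abs_powr compact_Times) auto
  then show ?thesis
    by (fastforce dest: compact_imp_bounded simp: bounded_real intro: that)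
qed

lemma abs_powr_small_near_boundary:
  assumes "t \<ge> 0" and "\<epsilon> > 0"
  obtains \<rho> where "\<rho> > 0"
    and "\<And>s z. s \<in> {0..t} \<Longrightarrow> z \<in> {0..1} \<Longrightarrow> z < \<rho> \<or> 1 - z < \<rho> \<Longrightarrow> \<bar>x s z\<bar> powr p < \<epsilon>"
proof -
  define S where "S = {0..t} \<times> {0..(1::real)}"
  have "uniformly_continuous_on S (\<lambda>(s, z). \<bar>x s z\<bar> powr p)"
    unfolding S_def by (intro compact_uniformly_continuous continuous_on_abs_powr compact_Times) auto
  then obtain \<rho> where "\<rho> > 0" and uc: "\<And>w w'. w \<in> S \<Longrightarrow> w' \<in> S \<Longrightarrow> dist w' w < \<rho> \<Longrightarrow>
      dist ((\<lambda>(s, z). \<bar>x s z\<bar> powr p) w') ((\<lambda>(s, z). \<bar>x s z\<bar> powr p) w) < \<epsilon>"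
    unfolding uniformly_continuous_on_def using assms(2) by metis
  show ?thesis
  proof (rule that[OF \<open>\<rho> > 0\<close>])
    fix s z assume s: "s \<in> {0..t}" and z: "z \<in> {0..1}" and near: "z < \<rho> \<or> 1 - z < \<rho>"
    obtain e where e: "e \<in> {0, 1}" "dist (s, z) (s, e) < \<rho>"
      using near
    proof (elim disjE)
      assume "z < \<rho>"
      then show ?thesis using that[of 0] z by (simp add: dist_Pair_Pair dist_real_def)
    next
      assume "1 - z < \<rho>"
      then show ?thesis using that[of 1] z by (simp add: dist_Pair_Pair dist_real_def)
    qed
    have "x s e = 0" using bc s e(1) by auto
    then show "\<bar>x s z\<bar> powr p < \<epsilon>"
      using uc[of "(s, e)" "(s, z)"] s z e by (auto simp: S_def dist_real_def)
  qed
qed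

lemma energy_nonneg: "s \<ge> 0 \<Longrightarrow> 0 \<le> energy s"
  unfolding energy_def
  using integrable_abs_powr_slice[of s 0 1 "\<lambda>_. 1"] by (intro integral_nonneg) auto

definition decay_rate :: "real \<Rightarrow> real" where
  "decay_rate k = a * (4 * (p - 1) / p) * k\<^sup>2"

definition weighted_energy :: "real \<Rightarrow> real \<Rightarrow> real \<Rightarrow> real" where
  "weighted_energy \<delta> \<eta> s = integral {\<delta>..1 - \<delta>} (\<lambda>z. trapezoid \<delta> (1 - \<delta>) \<eta> z * \<bar>x s z\<bar> powr p)"

lemma weighted_energy_between:
  assumes \<delta>: "0 < \<delta>" and \<eta>: "0 < \<eta>" and gap: "\<delta> + 2 * \<eta> \<le> 1 - \<delta>" and s: "s \<ge> 0"
  shows "integral {\<delta> + \<eta>..1 - \<delta> - \<eta>} (\<lambda>z. \<bar>x s z\<bar> powr p) \<le> weighted_energy \<delta> \<eta> s"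
    and "weighted_energy \<delta> \<eta> s \<le> integral {\<delta>..1 - \<delta>} (\<lambda>z. \<bar>x s z\<bar> powr p)"
proof -
  define T where "T = trapezoid \<delta> (1 - \<delta>) \<eta>"
  have Tu_int: "(\<lambda>z. T z * \<bar>x s z\<bar> powr p) integrable_on {\<delta>..1 - \<delta>}"
    unfolding T_def using \<delta> gap by (intro integrable_abs_powr_slice s continuous_on_trapezoid) auto
  have T_bounds: "0 \<le> T z" "T z \<le> 1" if "z \<in> {\<delta>..1 - \<delta>}" for z
    using trapezoid_bounds[OF \<eta> that] by (simp_all add: T_def)
  have "integral {\<delta> + \<eta>..1 - \<delta> - \<eta>} (\<lambda>z. \<bar>x s z\<bar> powr p)
      = integral {\<delta> + \<eta>..1 - \<delta> - \<eta>} (\<lambda>z. T z * \<bar>x s z\<bar> powr p)"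
    using trapezoid_eq(2)[OF \<eta> gap] by (intro integral_cong) (simp add: T_def)
  also have "\<dots> \<le> weighted_energy \<delta> \<eta> s"
    unfolding weighted_energy_def T_def[symmetric] using \<eta> T_bounds
    by (intro integral_subset_le Tu_int integrable_subinterval_real[OF Tu_int]) auto
  finally show "integral {\<delta> + \<eta>..1 - \<delta> - \<eta>} (\<lambda>z. \<bar>x s z\<bar> powr p) \<le> weighted_energy \<delta> \<eta> s" .
  show "weighted_energy \<delta> \<eta> s \<le> integral {\<delta>..1 - \<delta>} (\<lambda>z. \<bar>x s z\<bar> powr p)"
    unfolding weighted_energy_def T_def[symmetric] using \<delta> gap T_bounds
    by (intro integral_le Tu_int integrable_abs_powr_slice[OF s, of _ _ "\<lambda>_. 1", simplified])
      (auto intro: mult_left_le_one_le)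
qed

lemma weighted_energy_approximates_energy:
  assumes \<delta>: "0 < \<delta>" and \<eta>: "0 < \<eta>" and gap: "\<delta> + 2 * \<eta> \<le> 1 - \<delta>" and s: "s \<ge> 0"
    and M: "\<And>z. z \<in> {0..1} \<Longrightarrow> \<bar>x s z\<bar> powr p \<le> M"
  shows "weighted_energy \<delta> \<eta> s \<le> energy s"
    and "energy s \<le> weighted_energy \<delta> \<eta> s + 2 * (\<delta> + \<eta>) * M"
    and "weighted_energy \<delta> \<eta> s \<le> integral {\<delta> + \<eta>..1 - \<delta> - \<eta>} (\<lambda>z. \<bar>x s z\<bar> powr p) + 2 * \<eta> * M"
proof -
  let ?u = "\<lambda>z. \<bar>x s z\<bar> powr p"
  have u_int: "?u integrable_on {l..r}" if "0 \<le> l" "r \<le> 1" for l r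
    using integrable_abs_powr_slice[OF s, of l r "\<lambda>_. 1"] that by simp
  note between = weighted_energy_between[OF \<delta> \<eta> gap s]
  have "integral {\<delta>..1 - \<delta>} ?u \<le> energy s"
    unfolding energy_def using \<delta> gap by (intro integral_subset_le u_int) auto
  then show "weighted_energy \<delta> \<eta> s \<le> energy s"
    using between(2) by linarith
  have "energy s \<le> integral {\<delta> + \<eta>..1 - \<delta> - \<eta>} ?u + (\<delta> + \<eta> - 0 + (1 - (1 - \<delta> - \<eta>))) * M"
    unfolding energy_def using \<delta> \<eta> gap M
    by (intro integral_le_integral_subinterval_add u_int) auto
  then show "energy s \<le> weighted_energy \<delta> \<eta> s + 2 * (\<delta> + \<eta>) * M"
    using between(1) by (simp add: algebra_simps)
  have "integral {\<delta>..1 - \<delta>} ?u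
      \<le> integral {\<delta> + \<eta>..1 - \<delta> - \<eta>} ?u + (\<delta> + \<eta> - \<delta> + (1 - \<delta> - (1 - \<delta> - \<eta>))) * M"
    using \<delta> \<eta> gap M by (intro integral_le_integral_subinterval_add u_int) auto
  then show "weighted_energy \<delta> \<eta> s \<le> integral {\<delta> + \<eta>..1 - \<delta> - \<eta>} ?u + 2 * \<eta> * M"
    using between(2) by (simp add: algebra_simps)
qed

lemma weighted_energy_deriv_le:
  fixes h :: "real \<Rightarrow> real"
  assumes s: "s > 0" and \<delta>: "0 < \<delta>" and \<eta>: "0 < \<eta>" and gap: "\<delta> + 2 * \<eta> \<le> 1 - \<delta>"
    and h: "\<And>z. z \<in> {\<delta> + \<eta>..1 - \<delta> - \<eta>} \<Longrightarrow> (h has_real_derivative - (k\<^sup>2) - (h z)\<^sup>2) (at z)"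
    and h_left: "4 * (p - 1) / p * \<bar>h (\<delta> + \<eta>)\<bar> \<le> 1 / \<eta>"
    and h_right: "4 * (p - 1) / p * \<bar>h (1 - \<delta> - \<eta>)\<bar> \<le> 1 / \<eta>"
    and boundary: "\<bar>x s \<delta>\<bar> powr p + \<bar>x s (1 - \<delta>)\<bar> powr p \<le> 2 * \<eta>\<^sup>2"
    and M: "\<And>z. z \<in> {0..1} \<Longrightarrow> \<bar>x s z\<bar> powr p \<le> M"
  shows "\<exists>D. (weighted_energy \<delta> \<eta> has_real_derivative D) (at s)
           \<and> D \<le> \<eta> * (2 * a + 2 * decay_rate k * M) - decay_rate k * weighted_energy \<delta> \<eta> s"
proof -
  define \<kappa> where "\<kappa> = 4 * (p - 1) / p"
  define I where "I = integral {\<delta>..1 - \<delta>}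
      (\<lambda>z. trapezoid \<delta> (1 - \<delta>) \<eta> z * (p * (\<bar>x s z\<bar> powr (p - 2) * x s z) * xzz s z))"
  define mid where "mid = integral {\<delta> + \<eta>..1 - \<delta> - \<eta>} (\<lambda>z. \<bar>x s z\<bar> powr p)"
  have "(weighted_energy \<delta> \<eta> has_real_derivative a * I) (at s)"
    unfolding weighted_energy_def[abs_def] I_def
    using \<delta> \<eta> gap s by (intro has_real_derivative_weighted_energy continuous_on_trapezoid) auto
  moreover have "a * I \<le> \<eta> * (2 * a + 2 * decay_rate k * M) - decay_rate k * weighted_energy \<delta> \<eta> s"
  proof -
    have dissipation: "I \<le> (\<bar>x s \<delta>\<bar> powr p + \<bar>x s (1 - \<delta>)\<bar> powr p) / \<eta> - \<kappa> * k\<^sup>2 * mid"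
      unfolding I_def mid_def \<kappa>_def
    proof (rule integral_trapezoid_abs_powr_laplacian_le[OF p_gt \<eta> gap, where y' = "xz s" and h = h])
      fix z assume "z \<in> {\<delta>..1 - \<delta>}"
      then show "(x s has_real_derivative xz s z) (at z)" "(xz s has_real_derivative xzz s z) (at z)"
        using d_z[OF s] d_zz[OF s] \<delta> by auto
    qed (use h h_left h_right in auto)
    have "(\<bar>x s \<delta>\<bar> powr p + \<bar>x s (1 - \<delta>)\<bar> powr p) / \<eta> \<le> 2 * \<eta>"
      using boundary \<eta> by (simp add: divide_le_eq power2_eq_square mult.commute)
    moreover have "\<kappa> * k\<^sup>2 * (weighted_energy \<delta> \<eta> s - 2 * \<eta> * M) \<le> \<kappa> * k\<^sup>2 * mid"
      using weighted_energy_approximates_energy(3)[OF \<delta> \<eta> gap _ M] s p_gt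
      by (intro mult_left_mono) (auto simp: \<kappa>_def mid_def)
    ultimately have "I \<le> 2 * \<eta> - \<kappa> * k\<^sup>2 * (weighted_energy \<delta> \<eta> s - 2 * \<eta> * M)"
      using dissipation by linarith
    then have "a * I \<le> a * (2 * \<eta> - \<kappa> * k\<^sup>2 * (weighted_energy \<delta> \<eta> s - 2 * \<eta> * M))"
      using a_pos by (intro mult_left_mono) auto
    also have "\<dots> = \<eta> * (2 * a + 2 * decay_rate k * M) - decay_rate k * weighted_energy \<delta> \<eta> s"
      unfolding decay_rate_def \<kappa>_def[symmetric] by (simp add: algebra_simps)
    finally show ?thesis .
  qed
  ultimately show ?thesis by blast
qed

lemma energy_estimate_approx:
  fixes h :: "real \<Rightarrow> real" and k t \<eta> M :: real
  assumes t: "t \<ge> 0" and \<eta>: "0 < \<eta>" "\<eta> \<le> 1/4"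
    and h: "\<And>z. z \<in> {0..1} \<Longrightarrow> (h has_real_derivative - (k\<^sup>2) - (h z)\<^sup>2) (at z)"
    and h_bound: "\<And>z. z \<in> {0..1} \<Longrightarrow> 4 * (p - 1) / p * \<bar>h z\<bar> \<le> 1 / \<eta>"
    and M: "\<And>s z. s \<in> {0..t} \<Longrightarrow> z \<in> {0..1} \<Longrightarrow> \<bar>x s z\<bar> powr p \<le> M"
  shows "exp (decay_rate k * t) * (energy t - 4 * \<eta> * M)
         \<le> energy 0 + \<eta> * (2 * a + 2 * decay_rate k * M) * t * exp (decay_rate k * t)"
proof -
  have M_nonneg: "M \<ge> 0"
    using order_trans[OF powr_ge_zero M[of 0 0]] t by simp
  obtain \<rho> where \<rho>: "\<rho> > 0" and small: "\<And>s z. s \<in> {0..t} \<Longrightarrow> z \<in> {0..1} \<Longrightarrow> z < \<rho> \<or> 1 - z < \<rho> \<Longrightarrow>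
      \<bar>x s z\<bar> powr p < \<eta>\<^sup>2"
    using abs_powr_small_near_boundary[OF t, of "\<eta>\<^sup>2"] \<eta> by auto
  define \<delta> where "\<delta> = min (\<rho> / 2) \<eta>"
  have \<delta>: "0 < \<delta>" "\<delta> \<le> \<eta>" "\<delta> < \<rho>" and gap: "\<delta> + 2 * \<eta> \<le> 1 - \<delta>"
    using \<rho> \<eta> by (auto simp: \<delta>_def)
  define W where "W = weighted_energy \<delta> \<eta>"
  have "exp (decay_rate k * t) * W t \<le> W 0 + \<eta> * (2 * a + 2 * decay_rate k * M) * t * exp (decay_rate k * t)"
  proof (rule gronwall_linear[OF t])
    show "0 \<le> decay_rate k" "0 \<le> \<eta> * (2 * a + 2 * decay_rate k * M)"
      using a_pos p_gt \<eta> M_nonneg by (auto simp: decay_rate_def)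
    have "continuous_on {0..} W"
      unfolding W_def weighted_energy_def[abs_def] using \<delta> gap
      by (intro continuous_on_weighted_energy continuous_on_trapezoid) auto
    then show "continuous_on {0..t} W"
      by (rule continuous_on_subset) auto
    fix s assume s: "0 < s" "s < t"
    have "\<bar>x s \<delta>\<bar> powr p + \<bar>x s (1 - \<delta>)\<bar> powr p \<le> 2 * \<eta>\<^sup>2"
      using small[of s \<delta>] small[of s "1 - \<delta>"] s \<delta> gap by auto
    then show "\<exists>D. (W has_real_derivative D) (at s) \<and> D \<le> \<eta> * (2 * a + 2 * decay_rate k * M) - decay_rate k * W s"
      unfolding W_def using s \<delta> \<eta> gap M h_bound
      by (intro weighted_energy_deriv_le[where h = h] h) auto
  qed
  moreover have "W 0 \<le> energy 0"
    unfolding W_def using M t by (intro weighted_energy_approximates_energy(1)[OF \<delta>(1) \<eta>(1) gap]) auto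
  moreover have "exp (decay_rate k * t) * (energy t - 4 * \<eta> * M) \<le> exp (decay_rate k * t) * W t"
  proof (intro mult_left_mono)
    have "energy t \<le> W t + 2 * (\<delta> + \<eta>) * M"
      unfolding W_def using M t by (intro weighted_energy_approximates_energy(2)[OF \<delta>(1) \<eta>(1) gap]) auto
    moreover have "2 * (\<delta> + \<eta>) * M \<le> 4 * \<eta> * M"
      using \<delta> M_nonneg by (intro mult_right_mono) auto
    ultimately show "energy t - 4 * \<eta> * M \<le> W t" by linarith
  qed simp
  ultimately show ?thesis by linarith
qed

lemma energy_decay_below_pi:
  assumes k: "0 < k" "k < pi" and t: "t \<ge> 0"
  shows "exp (decay_rate k * t) * energy t \<le> energy 0"
proof -
  define \<kappa> where "\<kappa> = 4 * (p - 1) / p"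
  define \<Lambda> where "\<Lambda> = decay_rate k"
  obtain h :: "real \<Rightarrow> real" and C
    where h: "\<And>z. z \<in> {0..1} \<Longrightarrow> (h has_real_derivative - (k\<^sup>2) - (h z)\<^sup>2) (at z)"
      and C: "\<And>z. z \<in> {0..1} \<Longrightarrow> \<bar>h z\<bar> \<le> C"
    using bounded_riccati_solution[OF k] by blast
  have \<kappa>: "\<kappa> > 0" using p_gt by (simp add: \<kappa>_def)
  obtain M where M: "\<And>s z. s \<in> {0..t} \<Longrightarrow> z \<in> {0..1} \<Longrightarrow> \<bar>x s z\<bar> powr p \<le> M"
    using abs_powr_bounded[OF t] by blast
  define K where "K = (2 * a + 2 * \<Lambda> * M) * t * exp (\<Lambda> * t) + 4 * M * exp (\<Lambda> * t)"
  have "\<forall>\<^sub>F \<eta> in at_right 0. exp (\<Lambda> * t) * energy t \<le> energy 0 + \<eta> * K"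
    unfolding eventually_at_right_field
  proof (intro exI conjI allI impI)
    show "0 < min (1/4) (1 / (\<kappa> * \<bar>C\<bar> + 1))"
      using \<kappa> by (simp add: add_nonneg_pos)
    fix \<eta> :: real assume "0 < \<eta>" and \<eta>_small: "\<eta> < min (1/4) (1 / (\<kappa> * \<bar>C\<bar> + 1))"
    have h_bound: "\<kappa> * \<bar>h z\<bar> \<le> 1 / \<eta>" if "z \<in> {0..1}" for z
    proof -
      have "\<eta> * (\<kappa> * \<bar>C\<bar> + 1) < 1"
        using \<eta>_small \<kappa> by (simp add: less_divide_eq add_nonneg_pos mult.commute)
      then have "\<kappa> * \<bar>C\<bar> \<le> 1 / \<eta>"
        using \<open>0 < \<eta>\<close> by (simp add: le_divide_eq algebra_simps)
      moreover have "\<kappa> * \<bar>h z\<bar> \<le> \<kappa> * \<bar>C\<bar>"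
        using C[OF that] \<kappa> by (intro mult_left_mono) auto
      ultimately show ?thesis by linarith
    qed
    have "exp (\<Lambda> * t) * (energy t - 4 * \<eta> * M) \<le> energy 0 + \<eta> * (2 * a + 2 * \<Lambda> * M) * t * exp (\<Lambda> * t)"
      unfolding \<Lambda>_def using \<eta>_small h_bound
      by (intro energy_estimate_approx[OF t \<open>0 < \<eta>\<close> _ h _ M]) (auto simp: \<kappa>_def)
    then show "exp (\<Lambda> * t) * energy t \<le> energy 0 + \<eta> * K"
      by (simp add: K_def algebra_simps)
  qed
  moreover have "((\<lambda>\<eta>. energy 0 + \<eta> * K) \<longlongrightarrow> energy 0) (at_right 0)"
    by (auto intro!: tendsto_eq_intros)
  ultimately show ?thesis
    unfolding \<Lambda>_def by (intro tendsto_le[OF trivial_limit_at_right_real _ tendsto_const])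
qed

lemma energy_decay:
  assumes t: "t \<ge> 0"
  shows "energy t \<le> exp (- decay_rate pi * t) * energy 0"
proof -
  let ?bound = "\<lambda>k. exp (- decay_rate k * t) * energy 0"
  have "\<forall>\<^sub>F k in at_left pi. energy t \<le> ?bound k"
    unfolding eventually_at_left_field
  proof (intro exI[of _ 0] conjI allI impI)
    fix k :: real assume "0 < k" "k < pi"
    from energy_decay_below_pi[OF this t] show "energy t \<le> ?bound k"
      by (simp add: exp_minus field_simps)
  qed simp
  moreover have "(?bound \<longlongrightarrow> ?bound pi) (at_left pi)"
    unfolding decay_rate_def by (intro tendsto_intros tendsto_ident_at)
  ultimately show ?thesis
    by (intro tendsto_le[OF trivial_limit_at_left_real _ tendsto_const])
qed

end

theorem mainTheorem8:
  fixes a p :: real and x :: "real \<Rightarrow> real \<Rightarrow> real" and x0 :: "real \<Rightarrow> real"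
    and xt xz xzz :: "real \<Rightarrow> real \<Rightarrow> real"
  assumes a_pos: "a > 0"
    and p_gt: "p > 2"
    and cont: "continuous_on ({0..} \<times> {0..1}) (\<lambda>(t, z). x t z)"
    and d_t: "\<And>t z. t > 0 \<Longrightarrow> 0 < z \<Longrightarrow> z < 1 \<Longrightarrow>
                 ((\<lambda>s. x s z) has_real_derivative xt t z) (at t)"
    and d_z: "\<And>t z. t > 0 \<Longrightarrow> 0 < z \<Longrightarrow> z < 1 \<Longrightarrow>
                 ((\<lambda>w. x t w) has_real_derivative xz t z) (at z)"
    and d_zz: "\<And>t z. t > 0 \<Longrightarrow> 0 < z \<Longrightarrow> z < 1 \<Longrightarrow>
                 ((\<lambda>w. xz t w) has_real_derivative xzz t z) (at z)"
    and cont_t: "continuous_on ({0<..} \<times> {0<..<1}) (\<lambda>(t, z). xt t z)"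
    and cont_z: "continuous_on ({0<..} \<times> {0<..<1}) (\<lambda>(t, z). xz t z)"
    and cont_zz: "continuous_on ({0<..} \<times> {0<..<1}) (\<lambda>(t, z). xzz t z)"
    and C2_slices: "\<And>t. t \<ge> 0 \<Longrightarrow> C2_on {0..1} (x t)"
    and pde: "\<And>t z. t > 0 \<Longrightarrow> 0 < z \<Longrightarrow> z < 1 \<Longrightarrow> xt t z = a * xzz t z"
    and bc: "\<And>t. t \<ge> 0 \<Longrightarrow> x t 0 = 0 \<and> x t 1 = 0"
    and init: "\<And>z. z \<in> {0..1} \<Longrightarrow> x 0 z = x0 z"
    and x0_C2: "C2_on {0..1} x0"
  shows "\<forall>t\<ge>0. lp_norm p (x t) \<le> exp (- a * (p - 1) * (4 * pi\<^sup>2 / p\<^sup>2) * t) * lp_norm p x0"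
proof (intro allI impI)
  fix t :: real assume t: "t \<ge> 0"
  interpret heat_solution a p x xt xz xzz
    using a_pos p_gt cont d_t d_z d_zz cont_t pde bc by unfold_locales
  define E where "E = exp (- decay_rate pi * t)"
  have "energy 0 = integral {0..1} (\<lambda>z. \<bar>x0 z\<bar> powr p)"
    unfolding energy_def by (rule integral_cong) (simp add: init)
  then have "lp_norm p x0 = energy 0 powr (1 / p)"
    by (simp add: lp_norm_def)
  moreover have "lp_norm p (x t) = energy t powr (1 / p)"
    by (simp add: lp_norm_def energy_def)
  moreover have "energy t powr (1 / p) \<le> E powr (1 / p) * energy 0 powr (1 / p)"
    using energy_decay[OF t] energy_nonneg[OF t] p_gt
    by (subst powr_mult[symmetric]) (auto simp: E_def intro: powr_mono2)
  moreover have "E powr (1 / p) = exp (- a * (p - 1) * (4 * pi\<^sup>2 / p\<^sup>2) * t)"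
    unfolding E_def exp_powr_real decay_rate_def using p_gt by (simp add: field_simps power2_eq_square)
  ultimately show "lp_norm p (x t) \<le> exp (- a * (p - 1) * (4 * pi\<^sup>2 / p\<^sup>2) * t) * lp_norm p x0"
    by simp
qed

end
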